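(* In the setting of the half-isotropic Björling construction (with data $Y_0,\hat Y_0,\psi_0,\gamma_{12}$, frame $P_1,P_2$ and the resulting functions $\mu_1,\mu_2,\rho_1,\rho_2,k_1,k_2,\gamma_{11}$ satisfying the structure equations below), let $y=[Y]$ be the resulting Willmore surface. Then $Y_0(\mathbb I)$ is a curve of umbilic points of $y$ if and only if $k_1=k_2\equiv0$ on $\mathbb I$.
   Context: Light cone model: $\mathbb R^5_1$ with $\langle x,y\rangle=-x_0y_0+\sum_{j=1}^4x_jy_j$; $\mathbb S^3$ the projectivized forward light cone. Data: $\psi_0:\mathbb I\to\mathbb S^4_1=\{\langle x,x\rangle=1\}$ non-constant real analytic; $Y_0$ a real analytic null curve with $\langle Y_0,\psi_0\rangle=\langle Y_0,\psi_0'\rangle=0$, $\langle Y_0',Y_0'\rangle=1$; $\hat Y_0$ real analytic null with $\langle\psi_0,\hat Y_0\rangle=0$, $\langle Y_0,\hat Y_0\rangle=-1$; $\gamma_{12}$ a real analytic function; unit $P_1\equiv Y_{0u}\bmod Y_0$, $P_1\perp\hat Y_0$, $P_2\perp\{\psi_0,Y_0,\hat Y_0,P_1\}$, $\det(Y_0,\hat Y_0,P_1,P_2,\psi_0)=1$; functions defined by $Y_{0u}=-\mu_1Y_0+P_1$, $\hat Y_{0u}=\mu_1\hat Y_0+\rho_1P_1+\rho_2P_2+4\gamma_{11}\psi_0$, $P_{1u}=\mu_2P_2+2k_1\psi_0+\hat Y_0+\rho_1Y_0$, $P_{2u}=-\mu_2P_1-2k_2\psi_0+\rho_2Y_0$,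 $\psi_{0u}=-2k_1P_1+2k_2P_2+4\gamma_{11}Y_0$. The resulting Willmore surface is the unique Willmore surface $y$ on a neighbourhood of $\mathbb I$ (coordinate $z=u+iv$) with canonical lift $Y$ ($\langle Y_z,Y_{\bar z}\rangle=\frac12$, $\langle Y_z,Y_z\rangle=0$) satisfying $Y|_{\mathbb I}=Y_0$, conformal Gauss map $\psi$ with $\psi|_{\mathbb I}=\psi_0$, and $\langle\psi_v|_{\mathbb I},\hat Y_0\rangle$ prescribed by $\gamma_{12}$. A point is umbilic if $\kappa=0$ there, where $Y_{zz}=-\frac s2Y+\kappa$ with $\kappa$ orthogonal to $Y,Y_z,Y_{\bar z},Y_{z\bar z}$. *)

theory Defs
  imports "HOL-Analysis.Analysis" "HOL-Library.Numeral_Type"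
begin

text \<open>Minkowski space R^5_1: coordinates indexed by type 5, index 0 is the time coordinate.\<close>

definition lor :: "real^5 \<Rightarrow> real^5 \<Rightarrow> real" where
  "lor x y = - (x$0 * y$0) + (\<Sum>j\<in>UNIV - {0}. x$j * y$j)"

definition lorC :: "complex^5 \<Rightarrow> complex^5 \<Rightarrow> complex" where
  "lorC x y = - (x$0 * y$0) + (\<Sum>j\<in>UNIV - {0}. x$j * y$j)"

definition cv :: "real^5 \<Rightarrow> complex^5" where
  "cv x = (\<chi> i. complex_of_real (x$i))"

definition real_analytic_on :: "real set \<Rightarrow> (real \<Rightarrow> 'a::real_normed_vector) \<Rightarrow> bool" where
  "real_analytic_on I f \<longleftrightarrow>
     (\<forall>x\<in>I. \<exists>r>0. \<exists>a::nat \<Rightarrow> 'a. \<forall>t. \<bar>t - x\<bar> < r \<longrightarrow> (\<lambda>n. (t - x)^n *\<^sub>R a n) sums f t)"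

fun dd :: "complex list \<Rightarrow> (complex \<Rightarrow> 'a::real_normed_vector) \<Rightarrow> complex \<Rightarrow> 'a" where
  "dd [] f = f"
| "dd (d # ds) f = (\<lambda>z. vector_derivative (\<lambda>t::real. dd ds f (z + complex_of_real t * d)) (at 0))"

definition smooth_on :: "complex set \<Rightarrow> (complex \<Rightarrow> 'a::real_normed_vector) \<Rightarrow> bool" where
  "smooth_on U f \<longleftrightarrow> open U \<and>
     (\<forall>ds d. \<forall>z\<in>U. (\<lambda>t::real. dd ds f (z + complex_of_real t * d)) differentiable (at 0)) \<and>
     (\<forall>ds. continuous_on U (dd ds f))"

definition du :: "(complex \<Rightarrow> 'a::real_normed_vector) \<Rightarrow> complex \<Rightarrow> 'a" where
  "du f z = vector_derivative (\<lambda>t::real. f (z + complex_of_real t)) (at 0)"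

definition dv :: "(complex \<Rightarrow> 'a::real_normed_vector) \<Rightarrow> complex \<Rightarrow> 'a" where
  "dv f z = vector_derivative (\<lambda>t::real. f (z + \<i> * complex_of_real t)) (at 0)"

definition Dz :: "(complex \<Rightarrow> real^5) \<Rightarrow> complex \<Rightarrow> complex^5" where
  "Dz Y z = (1/2) *s (cv (du Y z) - \<i> *s cv (dv Y z))"

definition Dzb :: "(complex \<Rightarrow> real^5) \<Rightarrow> complex \<Rightarrow> complex^5" where
  "Dzb Y z = (1/2) *s (cv (du Y z) + \<i> *s cv (dv Y z))"

definition Dzz :: "(complex \<Rightarrow> real^5) \<Rightarrow> complex \<Rightarrow> complex^5" where
  "Dzz Y z = (1/4) *s (cv (du (du Y) z) - cv (dv (dv Y) z) - (2 * \<i>) *s cv (du (dv Y) z))"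

definition Dzzb :: "(complex \<Rightarrow> real^5) \<Rightarrow> complex \<Rightarrow> complex^5" where
  "Dzzb Y z = (1/4) *s cv (du (du Y) z + dv (dv Y) z)"

definition canonical_lift_on :: "complex set \<Rightarrow> (complex \<Rightarrow> real^5) \<Rightarrow> bool" where
  "canonical_lift_on U Y \<longleftrightarrow> smooth_on U Y \<and>
     (\<forall>z\<in>U. lor (Y z) (Y z) = 0 \<and> (Y z)$0 > 0 \<and>
             lorC (Dz Y z) (Dzb Y z) = 1/2 \<and> lorC (Dz Y z) (Dz Y z) = 0)"

definition conformal_gauss_map_on :: "complex set \<Rightarrow> (complex \<Rightarrow> real^5) \<Rightarrow> (complex \<Rightarrow> real^5) \<Rightarrow> bool" where
  "conformal_gauss_map_on U Y \<psi> \<longleftrightarrow> smooth_on U \<psi> \<and>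
     (\<forall>z\<in>U. lor (\<psi> z) (\<psi> z) = 1 \<and> lor (\<psi> z) (Y z) = 0 \<and>
             lor (\<psi> z) (du Y z) = 0 \<and> lor (\<psi> z) (dv Y z) = 0 \<and>
             lor (\<psi> z) (du (du Y) z + dv (dv Y) z) = 0)"

text \<open>Willmore: the conformal Gauss map is harmonic into S^4_1, i.e. psi_{z zbar} is parallel to psi.\<close>
definition willmore_on :: "complex set \<Rightarrow> (complex \<Rightarrow> real^5) \<Rightarrow> bool" where
  "willmore_on U \<psi> \<longleftrightarrow> (\<forall>z\<in>U. \<exists>c::real. du (du \<psi>) z + dv (dv \<psi>) z = c *\<^sub>R \<psi> z)"

definition umbilic_at :: "(complex \<Rightarrow> real^5) \<Rightarrow> complex \<Rightarrow> bool" where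
  "umbilic_at Y z \<longleftrightarrow> (\<exists>s \<kappa>. Dzz Y z = (- s / 2) *s cv (Y z) + \<kappa> \<and>
      lorC \<kappa> (cv (Y z)) = 0 \<and> lorC \<kappa> (Dz Y z) = 0 \<and> lorC \<kappa> (Dzb Y z) = 0 \<and>
      lorC \<kappa> (Dzzb Y z) = 0 \<and> \<kappa> = 0)"

definition frame_mat :: "real^5 \<Rightarrow> real^5 \<Rightarrow> real^5 \<Rightarrow> real^5 \<Rightarrow> real^5 \<Rightarrow> real^5^5" where
  "frame_mat a b c d e = (\<chi> i. if i = 0 then a else if i = 1 then b else if i = 2 then c
                                  else if i = 3 then d else e)"

end

theory Submission
  imports Defs
begin

(* The statement is pointwise: for t in the interval, Y is umbilic at t iff k1 t = 0 and k2 t = 0.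
   Since kappa = 0 is part of umbilicity, y is umbilic at z iff Y_zz is a complex multiple of Y,
   i.e. iff both W = Y_uu - Y_vv and X = Y_uv are real multiples of Y.

   1. Algebra of the Lorentz product and of a light-cone frame (Y, Yh, P1, P2, psi): a vector
      orthogonal to Y, to Y_u = P1 + a Y and to a unit vector Y_v in the frame's normal plane is a
      multiple of Y iff it is also orthogonal to psi.
   2. Calculus on the plane: derivatives of smooth maps are smooth, constant Lorentz products have
      vanishing derivative, and mixed partials commute (Clairaut's theorem, proved from the mean
      value theorem, as the library has no version of it).
   3. Differentiating the conformality relations of the canonical lift shows that W and X are
      orthogonal to Y, Y_u, Y_v; differentiating the defining relations of the conformal Gauss map
      gives <psi, W> = -2 <psi_u, Y_u> and <psi, X> = -<psi_u, Y_v>.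
   4. On the real axis the structure equations give Y_u and psi_u in the frame, whence
      <psi, W> = 4 k1 and <psi, X> = -2 sigma k2 with sigma = +-1, and the theorem follows. *)

lemma lor_sym: "lor x y = lor y x"
  by (simp add: lor_def mult.commute)

lemma lor_add_left [simp]: "lor (x + y) w = lor x w + lor y w"
  by (simp add: lor_def algebra_simps sum.distrib)
lemma lor_add_right [simp]: "lor w (x + y) = lor w x + lor w y"
  by (simp add: lor_def algebra_simps sum.distrib)
lemma lor_diff_left [simp]: "lor (x - y) w = lor x w - lor y w"
  by (simp add: lor_def algebra_simps sum_subtractf)
lemma lor_diff_right [simp]: "lor w (x - y) = lor w x - lor w y"
  by (simp add: lor_def algebra_simps sum_subtractf)
lemma lor_scale_left [simp]: "lor (c *\<^sub>R x) w = c * lor x w"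
  by (simp add: lor_def algebra_simps sum_distrib_left)
lemma lor_scale_right [simp]: "lor w (c *\<^sub>R x) = c * lor w x"
  by (simp add: lor_def algebra_simps sum_distrib_left)

(* The Lorentz product is the Euclidean inner product twisted by a reflection, hence bounded
   bilinear; this gives the product rule for derivatives of Lorentz products. *)

lemma lor_as_inner: "lor x y = inner x (\<chi> i. if i = 0 then - y$i else y$i)"
proof -
  have "inner x (\<chi> i. if i = 0 then - y$i else y$i)
      = x$0 * (- y$0) + (\<Sum>i\<in>UNIV-{0}. x$i * y$i)"
    by (simp add: inner_vec_def sum.remove[of UNIV 0])
  then show ?thesis by (simp add: lor_def)
qed

lemma bounded_bilinear_lor: "bounded_bilinear lor"
proof -
  let ?J = "\<lambda>y::real^5. \<chi> i. if i = 0 then - y$i else y$i"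
  have "linear ?J" by (rule linearI) (auto simp: vec_eq_iff)
  then have "bounded_linear ?J" by (simp add: linear_conv_bounded_linear)
  from bounded_bilinear.comp[OF bounded_bilinear_inner bounded_linear_ident this]
  show ?thesis by (simp add: lor_as_inner[abs_def])
qed

lemma lorC_add_right [simp]: "lorC w (x + y) = lorC w x + lorC w y"
  by (simp add: lorC_def algebra_simps sum.distrib)
lemma lorC_diff_left [simp]: "lorC (x - y) w = lorC x w - lorC y w"
  by (simp add: lorC_def algebra_simps sum_subtractf)
lemma lorC_diff_right [simp]: "lorC w (x - y) = lorC w x - lorC w y"
  by (simp add: lorC_def algebra_simps sum_subtractf)
lemma lorC_scale_left [simp]: "lorC (c *s x) w = c * lorC x w"
  by (simp add: lorC_def algebra_simps sum_distrib_left)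
lemma lorC_scale_right [simp]: "lorC w (c *s x) = c * lorC w x"
  by (simp add: lorC_def algebra_simps sum_distrib_left)
lemma lorC_zero_left [simp]: "lorC 0 w = 0"
  by (simp add: lorC_def)
lemma lorC_cv [simp]: "lorC (cv x) (cv y) = complex_of_real (lor x y)"
  by (simp add: lorC_def lor_def cv_def)

lemma complexified_parallel:
  "(\<exists>c. cv A + \<i> *s cv B = c *s cv y) \<longleftrightarrow> (\<exists>\<alpha>. A = \<alpha> *\<^sub>R y) \<and> (\<exists>\<beta>. B = \<beta> *\<^sub>R y)"
proof
  assume "\<exists>c. cv A + \<i> *s cv B = c *s cv y"
  then obtain c where c: "\<And>j. complex_of_real (A$j) + \<i> * complex_of_real (B$j) = c * complex_of_real (y$j)"
    by (auto simp: vec_eq_iff cv_def)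
  have "A$j = Re c * y$j \<and> B$j = Im c * y$j" for j
    using arg_cong[OF c[of j], of Re] arg_cong[OF c[of j], of Im] by simp
  then show "(\<exists>\<alpha>. A = \<alpha> *\<^sub>R y) \<and> (\<exists>\<beta>. B = \<beta> *\<^sub>R y)"
    by (auto simp: vec_eq_iff)
next
  assume "(\<exists>\<alpha>. A = \<alpha> *\<^sub>R y) \<and> (\<exists>\<beta>. B = \<beta> *\<^sub>R y)"
  then obtain \<alpha> \<beta> where "A = \<alpha> *\<^sub>R y" "B = \<beta> *\<^sub>R y" by blast
  then have "cv A + \<i> *s cv B = Complex \<alpha> \<beta> *s cv y"
    by (simp add: vec_eq_iff cv_def complex_eq_iff)
  then show "\<exists>c. cv A + \<i> *s cv B = c *s cv y" by blast
qed

lemma rows_span: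
  fixes y h p1 p2 f x :: "real^5"
  assumes "det (frame_mat y h p1 p2 f) \<noteq> 0"
  shows "\<exists>c1 c2 c3 c4 c5. x = c1 *\<^sub>R y + c2 *\<^sub>R h + c3 *\<^sub>R p1 + c4 *\<^sub>R p2 + c5 *\<^sub>R f"
proof -
  define A where "A = frame_mat y h p1 p2 f"
  have univ: "(UNIV::5 set) = {0,1,2,3,4}"
    by (rule card_subset_eq[symmetric]) auto
  have "invertible (transpose A)" using assms
    by (simp add: A_def invertible_det_nz det_transpose)
  then obtain B where B: "transpose A ** B = mat 1"
    unfolding invertible_def by blast
  have "x = transpose A *v (B *v x)"
    by (simp add: matrix_vector_mul_assoc B)
  also have "\<dots> = (\<Sum>i\<in>UNIV. (B *v x)$i *\<^sub>R (A$i))"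
    by (simp add: vec_eq_iff matrix_vector_mult_def transpose_def sum_component mult.commute)
  finally have "x = (\<Sum>i\<in>{0,1,2,3,4}. (B *v x)$i *\<^sub>R (A$i))" by (simp only: univ)
  then show ?thesis
    by (simp add: A_def frame_mat_def add.assoc) blast
qed

locale lightcone_frame =
  fixes y h p1 p2 f :: "real^5"
  assumes yy: "lor y y = 0" and yh: "lor y h = -1" and yp1: "lor y p1 = 0"
    and yp2: "lor y p2 = 0" and yf: "lor y f = 0" and hh: "lor h h = 0"
    and hp1: "lor h p1 = 0" and hp2: "lor h p2 = 0" and hf: "lor h f = 0"
    and p1p1: "lor p1 p1 = 1" and p1p2: "lor p1 p2 = 0" and p1f: "lor p1 f = 0"
    and p2p2: "lor p2 p2 = 1" and p2f: "lor p2 f = 0" and ff: "lor f f = 1"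
    and nondegenerate: "det (frame_mat y h p1 p2 f) \<noteq> 0"
begin

lemmas products = yy yh yp1 yp2 yf hh hp1 hp2 hf p1p1 p1p2 p1f p2p2 p2f ff
lemmas products_sym = products products[THEN trans[OF lor_sym]]

lemma expansion:
  "x = (- lor x h) *\<^sub>R y + (- lor x y) *\<^sub>R h + lor x p1 *\<^sub>R p1 + lor x p2 *\<^sub>R p2 + lor x f *\<^sub>R f"
proof -
  obtain c1 c2 c3 c4 c5 where x: "x = c1 *\<^sub>R y + c2 *\<^sub>R h + c3 *\<^sub>R p1 + c4 *\<^sub>R p2 + c5 *\<^sub>R f"
    using rows_span[OF nondegenerate] by blast
  have "lor x h = - c1" "lor x y = - c2" "lor x p1 = c3" "lor x p2 = c4" "lor x f = c5"
    by (simp_all add: x products_sym)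
  then show ?thesis using x by simp
qed

lemma unit_normal_form:
  assumes "lor y v = 0" "lor p1 v = 0" "lor f v = 0" "lor v v = 1"
  shows "v = (- lor v h) *\<^sub>R y + lor v p2 *\<^sub>R p2" and "(lor v p2)\<^sup>2 = 1"
proof -
  show v: "v = (- lor v h) *\<^sub>R y + lor v p2 *\<^sub>R p2"
    using expansion[of v] assms(1-3) by (simp add: lor_sym)
  have "lor v v = lor ((- lor v h) *\<^sub>R y + lor v p2 *\<^sub>R p2) ((- lor v h) *\<^sub>R y + lor v p2 *\<^sub>R p2)"
    using v by simp
  also have "\<dots> = (lor v p2)\<^sup>2" by (simp add: products_sym power2_eq_square)
  finally show "(lor v p2)\<^sup>2 = 1" using assms(4) by simp
qed

lemma normal_line_criterion:
  assumes e2: "lor y e2 = 0" "lor p1 e2 = 0" "lor f e2 = 0" "lor e2 e2 = 1"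
    and w: "lor y w = 0" "lor (p1 + a *\<^sub>R y) w = 0" "lor e2 w = 0"
  shows "(\<exists>c. w = c *\<^sub>R y) \<longleftrightarrow> lor f w = 0"
proof
  assume "\<exists>c. w = c *\<^sub>R y"
  then show "lor f w = 0" by (auto simp: products_sym)
next
  assume wf: "lor f w = 0"
  define \<sigma> where "\<sigma> = lor e2 p2"
  have "\<sigma> \<noteq> 0" using unit_normal_form(2)[OF e2] by (auto simp: \<sigma>_def)
  moreover have "lor e2 w = \<sigma> * lor p2 w"
    by (subst unit_normal_form(1)[OF e2]) (simp add: w(1) \<sigma>_def)
  ultimately have wp2: "lor p2 w = 0" using w(3) by simp
  have "lor p1 w = 0" using w(1,2) by simp
  then have "w = (- lor w h) *\<^sub>R y"
    using expansion[of w] w(1) wp2 wf by (simp add: lor_sym)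
  then show "\<exists>c. w = c *\<^sub>R y" by blast
qed

end

lemma dd_append: "dd (ds @ es) F = dd ds (dd es F)"
  by (induction ds) simp_all

lemma du_as_dd: "du F = dd [1] F"
  by (simp add: fun_eq_iff du_def)

lemma dv_as_dd: "dv F = dd [\<i>] F"
  by (simp add: fun_eq_iff dv_def mult.commute)

lemma smooth_on_dd:
  assumes "smooth_on U F"
  shows "smooth_on U (dd [d] F)"
  using assms dd_append[of _ "[d]" F] unfolding smooth_on_def by metis

lemma smooth_on_du: "smooth_on U F \<Longrightarrow> smooth_on U (du F)"
  unfolding du_as_dd by (rule smooth_on_dd)

lemma smooth_on_dv: "smooth_on U F \<Longrightarrow> smooth_on U (dv F)"
  unfolding dv_as_dd by (rule smooth_on_dd)

lemma smooth_line_derivative: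
  assumes "smooth_on U F" "z \<in> U"
  shows "((\<lambda>t. F (z + of_real t * d)) has_vector_derivative dd [d] F z) (at 0)"
  using assms unfolding smooth_on_def by (metis dd.simps vector_derivative_works)

lemma lor_constant_directional:
  assumes A: "smooth_on U A" and B: "smooth_on U B" and z: "z \<in> U"
    and const: "\<And>w. w \<in> U \<Longrightarrow> lor (A w) (B w) = c"
  shows "lor (dd [d] A z) (B z) + lor (A z) (dd [d] B z) = 0"
proof -
  let ?line = "\<lambda>t::real. z + of_real t * d"
  have "open U" using A by (simp add: smooth_on_def)
  moreover have "isCont ?line 0" by (intro continuous_intros)
  ultimately have "\<forall>\<^sub>F t in nhds 0. ?line t \<in> U"
    using z by (simp add: isCont_def eventually_nhds_conv_at topological_tendstoD)
  then have "\<forall>\<^sub>F t in nhds 0. lor (A (?line t)) (B (?line t)) = c"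
    by eventually_elim (use const in auto)
  then have "((\<lambda>t. lor (A (?line t)) (B (?line t))) has_real_derivative 0) (at 0)"
    using DERIV_cong_ev[OF refl _ refl, of _ "\<lambda>_. c"] by simp
  moreover have "((\<lambda>t. lor (A (?line t)) (B (?line t))) has_real_derivative
      lor (A z) (dd [d] B z) + lor (dd [d] A z) (B z)) (at 0)"
    using bounded_bilinear.has_vector_derivative[OF bounded_bilinear_lor
        smooth_line_derivative[OF A z] smooth_line_derivative[OF B z]]
    by (simp add: has_real_derivative_iff_has_vector_derivative)
  ultimately show ?thesis
    using DERIV_unique by (simp add: add.commute)
qed

lemma lor_constant_du:
  "smooth_on U A \<Longrightarrow> smooth_on U B \<Longrightarrow> z \<in> U \<Longrightarrow> (\<And>w. w \<in> U \<Longrightarrow> lor (A w) (B w) = c)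
    \<Longrightarrow> lor (du A z) (B z) + lor (A z) (du B z) = 0"
  unfolding du_as_dd by (rule lor_constant_directional)

lemma lor_constant_dv:
  "smooth_on U A \<Longrightarrow> smooth_on U B \<Longrightarrow> z \<in> U \<Longrightarrow> (\<And>w. w \<in> U \<Longrightarrow> lor (A w) (B w) = c)
    \<Longrightarrow> lor (dv A z) (B z) + lor (A z) (dv B z) = 0"
  unfolding dv_as_dd by (rule lor_constant_directional)

lemma dist_square_corner: "dist (z + of_real s + of_real \<tau> * \<i>) z \<le> \<bar>s\<bar> + \<bar>\<tau>\<bar>"
proof -
  have "dist (z + of_real s + of_real \<tau> * \<i>) z = norm (of_real s + of_real \<tau> * \<i> :: complex)"
    by (simp add: dist_norm)
  also have "\<dots> \<le> norm (of_real s :: complex) + norm (of_real \<tau> * \<i>)"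
    by (rule norm_triangle_ineq)
  finally show ?thesis by (simp add: norm_mult)
qed

(* Key step of Clairaut's theorem: the second difference of g over a small square equals h^2 guv
   and h^2 gvu at two (possibly different) points of the square, by applying the mean value
   theorem twice in either order. *)

lemma mixed_second_difference:
  fixes g gu gv guv gvu :: "complex \<Rightarrow> real" and z :: complex
  defines "P \<equiv> \<lambda>s \<tau>::real. z + of_real s + of_real \<tau> * \<i>"
  assumes h: "0 < h"
    and square: "\<And>s \<tau>. 0 \<le> s \<Longrightarrow> s \<le> h \<Longrightarrow> 0 \<le> \<tau> \<Longrightarrow> \<tau> \<le> h \<Longrightarrow> P s \<tau> \<in> U"
    and hu: "\<And>w. w \<in> U \<Longrightarrow> ((\<lambda>t. g (w + of_real t)) has_real_derivative gu w) (at 0)"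
    and hv: "\<And>w. w \<in> U \<Longrightarrow> ((\<lambda>t. g (w + of_real t * \<i>)) has_real_derivative gv w) (at 0)"
    and huv: "\<And>w. w \<in> U \<Longrightarrow> ((\<lambda>t. gu (w + of_real t * \<i>)) has_real_derivative guv w) (at 0)"
    and hvu: "\<And>w. w \<in> U \<Longrightarrow> ((\<lambda>t. gv (w + of_real t)) has_real_derivative gvu w) (at 0)"
  shows "\<exists>s1 \<tau>1 s2 \<tau>2. 0 < s1 \<and> s1 < h \<and> 0 < \<tau>1 \<and> \<tau>1 < h \<and> 0 < s2 \<and> s2 < h \<and>
           0 < \<tau>2 \<and> \<tau>2 < h \<and> guv (P s1 \<tau>1) = gvu (P s2 \<tau>2)"
proof -
  have along_u: "((\<lambda>s. F (P s \<tau>)) has_real_derivative D) (at s0)"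
    if "((\<lambda>t. F (P s0 \<tau> + of_real t)) has_real_derivative D) (at 0)" for F D s0 \<tau>
  proof -
    have "(\<lambda>t. F (P (t + s0) \<tau>)) = (\<lambda>t. F (P s0 \<tau> + of_real t))"
      by (simp add: P_def algebra_simps)
    with that DERIV_shift[of "\<lambda>s. F (P s \<tau>)" D 0 s0] show ?thesis by simp
  qed
  have along_v: "((\<lambda>\<tau>. F (P s \<tau>)) has_real_derivative D) (at \<tau>0)"
    if "((\<lambda>t. F (P s \<tau>0 + of_real t * \<i>)) has_real_derivative D) (at 0)" for F D s \<tau>0
  proof -
    have "(\<lambda>t. F (P s (t + \<tau>0))) = (\<lambda>t. F (P s \<tau>0 + of_real t * \<i>))"
      by (simp add: P_def algebra_simps)
    with that DERIV_shift[of "\<lambda>\<tau>. F (P s \<tau>)" D 0 \<tau>0] show ?thesis by simp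
  qed
  define \<Delta> where "\<Delta> = g (P h h) - g (P h 0) - g (P 0 h) + g (P 0 0)"
  have "\<exists>s1. 0 < s1 \<and> s1 < h \<and> (g (P h h) - g (P h 0)) - (g (P 0 h) - g (P 0 0))
          = (h - 0) * (gu (P s1 h) - gu (P s1 0))"
  proof (rule MVT2[of 0 h "\<lambda>s. g (P s h) - g (P s 0)"])
    fix s assume "0 \<le> s" "s \<le> h"
    then show "((\<lambda>s. g (P s h) - g (P s 0)) has_real_derivative gu (P s h) - gu (P s 0)) (at s)"
      using h by (intro DERIV_diff along_u hu square) auto
  qed (use h in auto)
  then obtain s1 where s1: "0 < s1" "s1 < h" "\<Delta> = h * (gu (P s1 h) - gu (P s1 0))"
    by (auto simp: \<Delta>_def algebra_simps)
  have "\<exists>\<tau>1. 0 < \<tau>1 \<and> \<tau>1 < h \<and> gu (P s1 h) - gu (P s1 0) = (h - 0) * guv (P s1 \<tau>1)"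
  proof (rule MVT2[of 0 h "\<lambda>\<tau>. gu (P s1 \<tau>)"])
    fix \<tau> assume "0 \<le> \<tau>" "\<tau> \<le> h"
    then show "((\<lambda>\<tau>. gu (P s1 \<tau>)) has_real_derivative guv (P s1 \<tau>)) (at \<tau>)"
      using s1 by (intro along_v huv square) auto
  qed (use h in auto)
  then obtain \<tau>1 where \<tau>1: "0 < \<tau>1" "\<tau>1 < h" "gu (P s1 h) - gu (P s1 0) = h * guv (P s1 \<tau>1)"
    by auto
  have "\<exists>\<tau>2. 0 < \<tau>2 \<and> \<tau>2 < h \<and> (g (P h h) - g (P 0 h)) - (g (P h 0) - g (P 0 0))
          = (h - 0) * (gv (P h \<tau>2) - gv (P 0 \<tau>2))"
  proof (rule MVT2[of 0 h "\<lambda>\<tau>. g (P h \<tau>) - g (P 0 \<tau>)"])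
    fix \<tau> assume "0 \<le> \<tau>" "\<tau> \<le> h"
    then show "((\<lambda>\<tau>. g (P h \<tau>) - g (P 0 \<tau>)) has_real_derivative gv (P h \<tau>) - gv (P 0 \<tau>)) (at \<tau>)"
      using h by (intro DERIV_diff along_v hv square) auto
  qed (use h in auto)
  then obtain \<tau>2 where \<tau>2: "0 < \<tau>2" "\<tau>2 < h" "\<Delta> = h * (gv (P h \<tau>2) - gv (P 0 \<tau>2))"
    by (auto simp: \<Delta>_def algebra_simps)
  have "\<exists>s2. 0 < s2 \<and> s2 < h \<and> gv (P h \<tau>2) - gv (P 0 \<tau>2) = (h - 0) * gvu (P s2 \<tau>2)"
  proof (rule MVT2[of 0 h "\<lambda>s. gv (P s \<tau>2)"])
    fix s assume "0 \<le> s" "s \<le> h"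
    then show "((\<lambda>s. gv (P s \<tau>2)) has_real_derivative gvu (P s \<tau>2)) (at s)"
      using \<tau>2 by (intro along_u hvu square) auto
  qed (use h in auto)
  then obtain s2 where s2: "0 < s2" "s2 < h" "gv (P h \<tau>2) - gv (P 0 \<tau>2) = h * gvu (P s2 \<tau>2)"
    by auto
  have "h * (h * guv (P s1 \<tau>1)) = h * (h * gvu (P s2 \<tau>2))"
    using s1(3) \<tau>1(3) \<tau>2(3) s2(3) by (metis mult.assoc)
  then have "guv (P s1 \<tau>1) = gvu (P s2 \<tau>2)" using h by simp
  then show ?thesis using s1 \<tau>1 s2 \<tau>2 by blast
qed

(* Clairaut's theorem for real functions on the plane: if guv and gvu were different at z,
   continuity would separate them on a small square, contradicting the mixed second difference. *)

lemma clairaut: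
  fixes g gu gv guv gvu :: "complex \<Rightarrow> real"
  assumes U: "open U" "z \<in> U"
    and hu: "\<And>w. w \<in> U \<Longrightarrow> ((\<lambda>t. g (w + of_real t)) has_real_derivative gu w) (at 0)"
    and hv: "\<And>w. w \<in> U \<Longrightarrow> ((\<lambda>t. g (w + of_real t * \<i>)) has_real_derivative gv w) (at 0)"
    and huv: "\<And>w. w \<in> U \<Longrightarrow> ((\<lambda>t. gu (w + of_real t * \<i>)) has_real_derivative guv w) (at 0)"
    and hvu: "\<And>w. w \<in> U \<Longrightarrow> ((\<lambda>t. gv (w + of_real t)) has_real_derivative gvu w) (at 0)"
    and cont: "isCont guv z" "isCont gvu z"
  shows "guv z = gvu z"
proof (rule ccontr)
  assume ne: "guv z \<noteq> gvu z"
  define e where "e = \<bar>guv z - gvu z\<bar> / 2"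
  have "e > 0" using ne by (simp add: e_def)
  then obtain d1 d2 where d: "d1 > 0" "d2 > 0"
    "\<And>w. dist w z < d1 \<Longrightarrow> dist (guv w) (guv z) < e"
    "\<And>w. dist w z < d2 \<Longrightarrow> dist (gvu w) (gvu z) < e"
    using cont unfolding continuous_at_eps_delta by metis
  obtain r where r: "r > 0" "ball z r \<subseteq> U" using U open_contains_ball by blast
  define h where "h = min (min d1 d2) r / 4"
  have h: "0 < h" "2 * h < r" "2 * h \<le> d1" "2 * h \<le> d2" using d r by (auto simp: h_def)
  have near: "dist (z + of_real s + of_real \<tau> * \<i>) z < 2 * h" if "0 < s" "s < h" "0 < \<tau>" "\<tau> < h"
    for s \<tau> using dist_square_corner[of z s \<tau>] that by simp
  have "z + of_real s + of_real \<tau> * \<i> \<in> U" if "0 \<le> s" "s \<le> h" "0 \<le> \<tau>" "\<tau> \<le> h" for s \<tau>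
    using dist_square_corner[of z s \<tau>] that h r by (auto simp: dist_commute subset_iff)
  from mixed_second_difference[OF h(1) this hu hv huv hvu]
  obtain s1 \<tau>1 s2 \<tau>2 where corners: "0 < s1" "s1 < h" "0 < \<tau>1" "\<tau>1 < h" "0 < s2" "s2 < h"
      "0 < \<tau>2" "\<tau>2 < h" and eq: "guv (z + of_real s1 + of_real \<tau>1 * \<i>) = gvu (z + of_real s2 + of_real \<tau>2 * \<i>)"
    by blast
  have "dist (guv (z + of_real s1 + of_real \<tau>1 * \<i>)) (guv z) < e"
    using d(3) near[of s1 \<tau>1] corners h by simp
  moreover have "dist (gvu (z + of_real s2 + of_real \<tau>2 * \<i>)) (gvu z) < e"
    using d(4) near[of s2 \<tau>2] corners h by simp
  moreover have "\<bar>a - c\<bar> < \<bar>c - d\<bar> / 2 \<Longrightarrow> \<bar>b - d\<bar> < \<bar>c - d\<bar> / 2 \<Longrightarrow> a \<noteq> b"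
    for a b c d :: real by (auto simp: abs_if split: if_split_asm)
  ultimately show False
    using eq unfolding e_def dist_real_def by blast
qed

lemma smooth_mixed_partials:
  fixes F :: "complex \<Rightarrow> real^5"
  assumes F: "smooth_on U F" and z: "z \<in> U"
  shows "dv (du F) z = du (dv F) z"
proof -
  have deriv_du: "((\<lambda>t. G (w + of_real t) $ j) has_real_derivative du G w $ j) (at 0)"
    and deriv_dv: "((\<lambda>t. G (w + of_real t * \<i>) $ j) has_real_derivative dv G w $ j) (at 0)"
    if "smooth_on U G" "w \<in> U" for G :: "complex \<Rightarrow> real^5" and w j
    using bounded_linear.has_vector_derivative[OF bounded_linear_vec_nth
        smooth_line_derivative[OF that, of 1]]
      bounded_linear.has_vector_derivative[OF bounded_linear_vec_nth
        smooth_line_derivative[OF that, of \<i>]]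
    by (simp_all add: has_real_derivative_iff_has_vector_derivative du_as_dd dv_as_dd)
  have cont: "isCont G w" if "smooth_on U G" "w \<in> U" for G :: "complex \<Rightarrow> real^5" and w
    using that dd.simps(1)[of G] unfolding smooth_on_def by (metis continuous_on_eq_continuous_at)
  have Fu: "smooth_on U (du F)" and Fv: "smooth_on U (dv F)"
    using F by (simp_all add: smooth_on_du smooth_on_dv)
  have "dv (du F) z $ j = du (dv F) z $ j" for j
  proof (rule clairaut[where g = "\<lambda>w. F w $ j" and gu = "\<lambda>w. du F w $ j" and gv = "\<lambda>w. dv F w $ j"])
    show "open U" using F by (simp add: smooth_on_def)
    show "isCont (\<lambda>w. dv (du F) w $ j) z" "isCont (\<lambda>w. du (dv F) w $ j) z"
      using cont[OF smooth_on_dv[OF Fu] z] cont[OF smooth_on_du[OF Fv] z]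
      by (simp_all add: continuous_intros)
  qed (use F Fu Fv z deriv_du deriv_dv in auto)
  then show ?thesis by (simp add: vec_eq_iff)
qed

(* The canonical lift is conformal: Y_u, Y_v are orthonormal and, since Y is null, orthogonal
   to Y. *)

lemma conformal_first_order:
  assumes lift: "canonical_lift_on U Y" and z: "z \<in> U"
  shows "lor (du Y z) (du Y z) = 1" "lor (dv Y z) (dv Y z) = 1" "lor (du Y z) (dv Y z) = 0"
    and "lor (Y z) (du Y z) = 0" "lor (Y z) (dv Y z) = 0"
proof -
  define A where "A = lor (du Y z) (du Y z)"
  define B where "B = lor (dv Y z) (dv Y z)"
  define C where "C = lor (du Y z) (dv Y z)"
  have C': "lor (dv Y z) (du Y z) = C" by (simp add: C_def lor_sym)
  have "lorC (Dz Y z) (Dzb Y z) = 1/2" "lorC (Dz Y z) (Dz Y z) = 0"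
    using lift z by (auto simp: canonical_lift_on_def)
  then have e1: "complex_of_real A / 2 + complex_of_real B / 2 = 1"
    and e2: "complex_of_real A - complex_of_real B - 2 * \<i> * complex_of_real C = 0"
    unfolding Dz_def Dzb_def
    by (simp_all add: A_def[symmetric] B_def[symmetric] C_def[symmetric] C' algebra_simps)
  have "A / 2 + B / 2 = 1" using arg_cong[OF e1, of Re] by simp
  moreover have "A = B" "C = 0" using arg_cong[OF e2, of Re] arg_cong[OF e2, of Im] by simp_all
  ultimately show "lor (du Y z) (du Y z) = 1" "lor (dv Y z) (dv Y z) = 1" "lor (du Y z) (dv Y z) = 0"
    by (simp_all add: A_def B_def C_def)
  have Y: "smooth_on U Y" "\<And>w. w \<in> U \<Longrightarrow> lor (Y w) (Y w) = 0"
    using lift by (simp_all add: canonical_lift_on_def)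
  show "lor (Y z) (du Y z) = 0" "lor (Y z) (dv Y z) = 0"
    using lor_constant_du[OF Y(1) Y(1) z Y(2)] lor_constant_dv[OF Y(1) Y(1) z Y(2)]
    by (simp_all add: lor_sym)
qed

(* Differentiating the first order relations: W = Y_uu - Y_vv and X = Y_uv are orthogonal to
   Y, Y_u and Y_v.  Symmetry of mixed partials is needed to relate Y_vu to Y_uv. *)

lemma lift_second_order:
  assumes lift: "canonical_lift_on U Y" and z: "z \<in> U"
  defines "W \<equiv> du (du Y) z - dv (dv Y) z" and "X \<equiv> du (dv Y) z"
  shows "lor (Y z) W = 0" "lor (du Y z) W = 0" "lor (dv Y z) W = 0"
    and "lor (Y z) X = 0" "lor (du Y z) X = 0" "lor (dv Y z) X = 0"
proof -
  have Y: "smooth_on U Y" using lift by (simp add: canonical_lift_on_def)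
  have Yu: "smooth_on U (du Y)" and Yv: "smooth_on U (dv Y)"
    using Y by (simp_all add: smooth_on_du smooth_on_dv)
  note first = conformal_first_order[OF lift]
  have sym: "dv (du Y) z = X" unfolding X_def by (rule smooth_mixed_partials[OF Y z])
  have "lor (du Y z) (du Y z) + lor (Y z) (du (du Y) z) = 0"
    using lor_constant_du[OF Y Yu z first(4)] .
  moreover have "lor (dv Y z) (dv Y z) + lor (Y z) (dv (dv Y) z) = 0"
    using lor_constant_dv[OF Y Yv z first(5)] .
  ultimately show "lor (Y z) W = 0" using first(1,2)[OF z] by (simp add: W_def)
  show YX: "lor (Y z) X = 0"
    using lor_constant_du[OF Y Yv z first(5)] first(3)[OF z] by (simp add: X_def lor_sym)
  have uuu: "lor (du Y z) (du (du Y) z) = 0"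
    using lor_constant_du[OF Yu Yu z first(1)] by (simp add: lor_sym)
  show uX: "lor (du Y z) X = 0"
    using lor_constant_dv[OF Yu Yu z first(1)] by (simp add: sym lor_sym)
  show vX: "lor (dv Y z) X = 0"
    using lor_constant_du[OF Yv Yv z first(2)] by (simp add: X_def lor_sym)
  have vvv: "lor (dv Y z) (dv (dv Y) z) = 0"
    using lor_constant_dv[OF Yv Yv z first(2)] by (simp add: lor_sym)
  have "lor (du Y z) (dv (dv Y) z) = 0"
    using lor_constant_dv[OF Yu Yv z first(3)] vX by (simp add: sym lor_sym)
  then show "lor (du Y z) W = 0" using uuu by (simp add: W_def)
  have "lor (dv Y z) (du (du Y) z) = 0"
    using lor_constant_du[OF Yu Yv z first(3)] uX by (simp add: X_def lor_sym)
  then show "lor (dv Y z) W = 0" using vvv by (simp add: W_def)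
qed

(* Differentiating <psi, Y_u> = 0 and <psi, Y_v> = 0 in u expresses the psi-components of W and X through
   the first derivative of the conformal Gauss map. *)

lemma gauss_second_order:
  assumes lift: "canonical_lift_on U Y" and gauss: "conformal_gauss_map_on U Y \<psi>" and z: "z \<in> U"
  shows "lor (\<psi> z) (du (du Y) z - dv (dv Y) z) = - 2 * lor (du \<psi> z) (du Y z)"
    and "lor (\<psi> z) (du (dv Y) z) = - lor (du \<psi> z) (dv Y z)"
proof -
  have Y: "smooth_on U Y" using lift by (simp add: canonical_lift_on_def)
  have P: "smooth_on U \<psi>" and Pu: "\<And>w. w \<in> U \<Longrightarrow> lor (\<psi> w) (du Y w) = 0"
    and Pv: "\<And>w. w \<in> U \<Longrightarrow> lor (\<psi> w) (dv Y w) = 0"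
    and Ps: "lor (\<psi> z) (du (du Y) z + dv (dv Y) z) = 0"
    using gauss z by (simp_all add: conformal_gauss_map_on_def)
  have "lor (du \<psi> z) (du Y z) + lor (\<psi> z) (du (du Y) z) = 0"
    using lor_constant_du[OF P smooth_on_du[OF Y] z Pu] .
  then show "lor (\<psi> z) (du (du Y) z - dv (dv Y) z) = - 2 * lor (du \<psi> z) (du Y z)"
    using Ps by simp
  show "lor (\<psi> z) (du (dv Y) z) = - lor (du \<psi> z) (dv Y z)"
    using lor_constant_du[OF P smooth_on_dv[OF Y] z Pv] by simp
qed

lemma cv_combination: "(1/4) *s (cv A - cv B - (2 * \<i>) *s cv C)
    = cv ((1/4) *\<^sub>R (A - B)) + \<i> *s cv ((- 1/2) *\<^sub>R C)"
  by (simp add: vec_eq_iff cv_def algebra_simps)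

lemma parallel_scale_iff:
  fixes A y :: "'a::real_vector"
  assumes "c \<noteq> 0"
  shows "(\<exists>\<alpha>. c *\<^sub>R A = \<alpha> *\<^sub>R y) \<longleftrightarrow> (\<exists>\<alpha>. A = \<alpha> *\<^sub>R y)"
proof
  assume "\<exists>\<alpha>. c *\<^sub>R A = \<alpha> *\<^sub>R y"
  then obtain \<alpha> where "c *\<^sub>R A = \<alpha> *\<^sub>R y" by blast
  have "A = (1 / c) *\<^sub>R (c *\<^sub>R A)" using assms by simp
  also have "\<dots> = (\<alpha> / c) *\<^sub>R y" using \<open>c *\<^sub>R A = \<alpha> *\<^sub>R y\<close> by simp
  finally show "\<exists>\<alpha>. A = \<alpha> *\<^sub>R y" by blast
qed auto

(* Umbilicity in terms of real second derivatives: since kappa = 0 is required, umbilic points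
   are exactly those where Y_zz is a complex multiple of Y, i.e. where W and X are multiples
   of Y. *)

lemma umbilic_iff_second_derivatives_parallel:
  "umbilic_at Y z \<longleftrightarrow>
     (\<exists>\<alpha>. du (du Y) z - dv (dv Y) z = \<alpha> *\<^sub>R Y z) \<and> (\<exists>\<beta>. du (dv Y) z = \<beta> *\<^sub>R Y z)"
proof -
  have "umbilic_at Y z \<longleftrightarrow> (\<exists>c. Dzz Y z = c *s cv (Y z))"
  proof
    assume "umbilic_at Y z"
    then obtain s where "Dzz Y z = (- s / 2) *s cv (Y z)" unfolding umbilic_at_def by auto
    then show "\<exists>c. Dzz Y z = c *s cv (Y z)" by blast
  next
    assume "\<exists>c. Dzz Y z = c *s cv (Y z)"
    then obtain c where "Dzz Y z = (- (- 2 * c) / 2) *s cv (Y z) + 0" by auto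
    then show "umbilic_at Y z" unfolding umbilic_at_def by (intro exI[of _ "- 2 * c"] exI[of _ 0]) simp
  qed
  also have "\<dots> \<longleftrightarrow> (\<exists>\<alpha>. (1/4) *\<^sub>R (du (du Y) z - dv (dv Y) z) = \<alpha> *\<^sub>R Y z)
                      \<and> (\<exists>\<beta>. (- 1/2) *\<^sub>R du (dv Y) z = \<beta> *\<^sub>R Y z)"
    unfolding Dzz_def cv_combination by (rule complexified_parallel)
  also have "\<dots> \<longleftrightarrow> (\<exists>\<alpha>. du (du Y) z - dv (dv Y) z = \<alpha> *\<^sub>R Y z) \<and> (\<exists>\<beta>. du (dv Y) z = \<beta> *\<^sub>R Y z)"
    by (subst (1 2) parallel_scale_iff) simp_all
  finally show ?thesis .
qed

lemma du_on_real_axis: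
  fixes F :: "complex \<Rightarrow> real^5" and F0 :: "real \<Rightarrow> real^5"
  assumes t: "t \<in> {a<..<b}" and F0: "(F0 has_vector_derivative D) (at t)"
    and eq: "\<And>s. s \<in> {a<..<b} \<Longrightarrow> F (of_real s) = F0 s"
  shows "du F (of_real t) = D"
proof -
  have "((\<lambda>s. t + s) has_vector_derivative 1) (at 0)"
    by (auto intro!: derivative_eq_intros)
  from vector_diff_chain_at[OF this] F0
  have "((F0 \<circ> (\<lambda>s. t + s)) has_vector_derivative D) (at 0)" by simp
  then have "((\<lambda>s. F (of_real t + of_real s)) has_vector_derivative D) (at 0)"
  proof (rule has_vector_derivative_transform_within_open[where S = "{a - t<..<b - t}"])
    fix s assume "s \<in> {a - t<..<b - t}"
    then show "(F0 \<circ> (\<lambda>s. t + s)) s = F (of_real t + of_real s)"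
      using eq[of "t + s"] by simp
  qed (use t in auto)
  then show ?thesis by (simp add: du_def vector_derivative_at)
qed

lemma umbilic_iff_curvatures_vanish:
  assumes lift: "canonical_lift_on U Y" and gauss: "conformal_gauss_map_on U Y \<psi>" and z: "z \<in> U"
    and frame: "lightcone_frame (Y z) h p1 p2 (\<psi> z)"
    and Yu: "du Y z = - \<mu> *\<^sub>R Y z + p1"
    and \<psi>u: "du \<psi> z = - (2 * k1) *\<^sub>R p1 + (2 * k2) *\<^sub>R p2 + (4 * \<gamma>) *\<^sub>R Y z"
  shows "umbilic_at Y z \<longleftrightarrow> k1 = 0 \<and> k2 = 0"
proof -
  interpret lightcone_frame "Y z" h p1 p2 "\<psi> z" by (rule frame)
  define v where "v = dv Y z"
  note first = conformal_first_order[OF lift z, folded v_def]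
  have Yu': "du Y z = p1 + (- \<mu>) *\<^sub>R Y z" using Yu by simp
  have vY: "lor (Y z) v = 0" using first(5) .
  have v: "lor (Y z) v = 0" "lor p1 v = 0" "lor (\<psi> z) v = 0" "lor v v = 1"
    using vY first(2,3) gauss z by (simp_all add: Yu v_def conformal_gauss_map_on_def)
  define \<sigma> where "\<sigma> = lor v p2"
  have "\<sigma> \<noteq> 0" using unit_normal_form(2)[OF v] by (auto simp: \<sigma>_def)
  have \<psi>u_v: "lor (du \<psi> z) v = 2 * k2 * \<sigma>"
    unfolding \<psi>u by (subst unit_normal_form(1)[OF v]) (simp add: products_sym \<sigma>_def lor_sym)
  have \<psi>u_Yu: "lor (du \<psi> z) (du Y z) = - 2 * k1"
    unfolding \<psi>u Yu by (simp add: products_sym)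
  have criterion: "(\<exists>c. w = c *\<^sub>R Y z) \<longleftrightarrow> lor (\<psi> z) w = 0"
    if "lor (Y z) w = 0" "lor (du Y z) w = 0" "lor (dv Y z) w = 0" for w
    using normal_line_criterion[OF v, of w "- \<mu>"] that by (simp add: Yu' v_def)
  have "(\<exists>\<alpha>. du (du Y) z - dv (dv Y) z = \<alpha> *\<^sub>R Y z) \<longleftrightarrow> k1 = 0"
    using criterion[OF lift_second_order(1-3)[OF lift z]] gauss_second_order(1)[OF lift gauss z]
    by (simp add: \<psi>u_Yu del: lor_diff_right)
  moreover have "(\<exists>\<beta>. du (dv Y) z = \<beta> *\<^sub>R Y z) \<longleftrightarrow> k2 = 0"
    using criterion[OF lift_second_order(4-6)[OF lift z]] gauss_second_order(2)[OF lift gauss z]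
      \<open>\<sigma> \<noteq> 0\<close> by (simp add: \<psi>u_v[unfolded v_def])
  ultimately show ?thesis by (simp add: umbilic_iff_second_derivatives_parallel)
qed

theorem mainTheorem11:
  fixes a b :: real
    and Y0 Yh0 \<psi>0 P1 P2 :: "real \<Rightarrow> real^5"
    and \<gamma>12 \<mu>1 \<mu>2 \<rho>1 \<rho>2 k1 k2 \<gamma>11 :: "real \<Rightarrow> real"
    and U :: "complex set"
    and Y \<psi> :: "complex \<Rightarrow> real^5"
  assumes ab: "a < b"
    and an_psi0: "real_analytic_on {a<..<b} \<psi>0"
    and nonconst: "\<not> (\<exists>c. \<forall>t\<in>{a<..<b}. \<psi>0 t = c)"
    and an_Y0: "real_analytic_on {a<..<b} Y0"
    and an_Yh0: "real_analytic_on {a<..<b} Yh0"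
    and an_g12: "real_analytic_on {a<..<b} \<gamma>12"
    and data: "\<And>t. t \<in> {a<..<b} \<Longrightarrow>
        lor (\<psi>0 t) (\<psi>0 t) = 1 \<and>
        lor (Y0 t) (Y0 t) = 0 \<and> (Y0 t)$0 > 0 \<and>
        lor (Y0 t) (\<psi>0 t) = 0 \<and> lor (Y0 t) (vector_derivative \<psi>0 (at t)) = 0 \<and>
        lor (vector_derivative Y0 (at t)) (vector_derivative Y0 (at t)) = 1 \<and>
        lor (Yh0 t) (Yh0 t) = 0 \<and> lor (\<psi>0 t) (Yh0 t) = 0 \<and> lor (Y0 t) (Yh0 t) = -1"
    and frame: "\<And>t. t \<in> {a<..<b} \<Longrightarrow>
        lor (P1 t) (P1 t) = 1 \<and> lor (P1 t) (Yh0 t) = 0 \<and>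
        lor (P2 t) (P2 t) = 1 \<and> lor (P2 t) (\<psi>0 t) = 0 \<and> lor (P2 t) (Y0 t) = 0 \<and>
        lor (P2 t) (Yh0 t) = 0 \<and> lor (P2 t) (P1 t) = 0 \<and>
        det (frame_mat (Y0 t) (Yh0 t) (P1 t) (P2 t) (\<psi>0 t)) = 1"
    and str: "\<And>t. t \<in> {a<..<b} \<Longrightarrow>
        (Y0 has_vector_derivative (- \<mu>1 t *\<^sub>R Y0 t + P1 t)) (at t) \<and>
        (Yh0 has_vector_derivative (\<mu>1 t *\<^sub>R Yh0 t + \<rho>1 t *\<^sub>R P1 t + \<rho>2 t *\<^sub>R P2 t
                                      + (4 * \<gamma>11 t) *\<^sub>R \<psi>0 t)) (at t) \<and>
        (P1 has_vector_derivative (\<mu>2 t *\<^sub>R P2 t + (2 * k1 t) *\<^sub>R \<psi>0 t + Yh0 t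
                                     + \<rho>1 t *\<^sub>R Y0 t)) (at t) \<and>
        (P2 has_vector_derivative (- \<mu>2 t *\<^sub>R P1 t - (2 * k2 t) *\<^sub>R \<psi>0 t
                                     + \<rho>2 t *\<^sub>R Y0 t)) (at t) \<and>
        (\<psi>0 has_vector_derivative (- (2 * k1 t) *\<^sub>R P1 t + (2 * k2 t) *\<^sub>R P2 t
                                     + (4 * \<gamma>11 t) *\<^sub>R Y0 t)) (at t)"
    and U: "open U" "complex_of_real ` {a<..<b} \<subseteq> U"
    and lift: "canonical_lift_on U Y"
    and gauss: "conformal_gauss_map_on U Y \<psi>"
    and willmore: "willmore_on U \<psi>"
    and bdY: "\<And>t. t \<in> {a<..<b} \<Longrightarrow> Y (complex_of_real t) = Y0 t"
    and bdpsi: "\<And>t. t \<in> {a<..<b} \<Longrightarrow> \<psi> (complex_of_real t) = \<psi>0 t"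
    and bdg12: "\<And>t. t \<in> {a<..<b} \<Longrightarrow> lor (dv \<psi> (complex_of_real t)) (Yh0 t) = 4 * \<gamma>12 t"
  shows "(\<forall>t\<in>{a<..<b}. umbilic_at Y (complex_of_real t))
           \<longleftrightarrow> (\<forall>t\<in>{a<..<b}. k1 t = 0 \<and> k2 t = 0)"
proof -
  have "umbilic_at Y (complex_of_real t) \<longleftrightarrow> k1 t = 0 \<and> k2 t = 0" if t: "t \<in> {a<..<b}" for t
  proof -
    define z where "z = complex_of_real t"
    have z: "z \<in> U" using U(2) t by (auto simp: z_def)
    have Yz: "Y z = Y0 t" and \<psi>z: "\<psi> z = \<psi>0 t" using bdY bdpsi t by (simp_all add: z_def)
    have Y0': "(Y0 has_vector_derivative (- \<mu>1 t *\<^sub>R Y0 t + P1 t)) (at t)"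
      and \<psi>0': "(\<psi>0 has_vector_derivative (- (2 * k1 t) *\<^sub>R P1 t + (2 * k2 t) *\<^sub>R P2 t
                                     + (4 * \<gamma>11 t) *\<^sub>R Y0 t)) (at t)"
      using str[OF t] by simp_all
    have Yu: "du Y z = - \<mu>1 t *\<^sub>R Y z + P1 t"
      and \<psi>u: "du \<psi> z = - (2 * k1 t) *\<^sub>R P1 t + (2 * k2 t) *\<^sub>R P2 t + (4 * \<gamma>11 t) *\<^sub>R Y z"
      using du_on_real_axis[where F = Y, OF t Y0' bdY, folded z_def]
        du_on_real_axis[where F = \<psi>, OF t \<psi>0' bdpsi, folded z_def]
      by (simp_all add: Yz)
    have "lor (Y0 t) (P1 t) = 0" "lor (P1 t) (\<psi>0 t) = 0"
    proof -
      have "lor (\<psi> z) (du Y z) = 0" using gauss z by (simp add: conformal_gauss_map_on_def)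
      then show "lor (Y0 t) (P1 t) = 0" "lor (P1 t) (\<psi>0 t) = 0"
        using conformal_first_order(4)[OF lift z] data[OF t] by (simp_all add: Yu Yz \<psi>z lor_sym)
    qed
    with data[OF t] frame[OF t] have "lightcone_frame (Y z) (Yh0 t) (P1 t) (P2 t) (\<psi> z)"
      by unfold_locales (simp_all add: Yz \<psi>z lor_sym)
    from umbilic_iff_curvatures_vanish[OF lift gauss z this Yu \<psi>u] show ?thesis
      by (simp add: z_def)
  qed
  then show ?thesis by blast
qed

end
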